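(* Let $f:[-1,1]\to\mathbb{R}$ be continuous, let $n\geq 0$, and let $\underline{c}=(c_0,\ldots,c_n)^\top\in\mathbb{R}^{n+1}$. Define $L[\underline{c}]=(\mu_0,\ldots,\mu_n)^\top$ by \[ \mu_i=\int_{-1}^1\operatorname{sign}\!\Big(f(x)-\sum_{j=0}^n c_jU_j(x)\Big)U_i(x)\,dx,\qquad 0\leq i\leq n. \] If $M:=\tfrac{2}{\pi}(n+2)^2\max_{0\leq i\leq n}|\mu_i|<1$, then \[ \Big\|f-\sum_{j=0}^n c_jU_j\Big\|_1\leq\frac{1}{1-M}\,\|f-p_n^{L_1}\|_1, \] where $p_n^{L_1}$ is the best $L_1$ polynomial approximant of degree $\leq n$ to $f$.
   Context: $U_j$ is the Chebyshev polynomial of the second kind of degree $j$. $\operatorname{sign}(y)$ equals $1$ for $y>0$, $0$ for $y=0$, $-1$ for $y<0$. $\|g\|_1=\int_{-1}^1|g(x)|\,dx$, and $p_n^{L_1}$ is the (unique) real polynomial of degree $\leq n$ minimizing $\|f-q\|_1$. *)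

theory Defs
  imports "HOL-Analysis.Analysis" "HOL-Computational_Algebra.Polynomial"
begin

fun chebU :: "nat \<Rightarrow> real \<Rightarrow> real" where
  "chebU 0 x = 1"
| "chebU (Suc 0) x = 2 * x"
| "chebU (Suc (Suc j)) x = 2 * x * chebU (Suc j) x - chebU j x"

definition L1norm :: "(real \<Rightarrow> real) \<Rightarrow> real" where
  "L1norm g = integral {-1..1} (\<lambda>x. \<bar>g x\<bar>)"

definition chebU_sum :: "nat \<Rightarrow> (nat \<Rightarrow> real) \<Rightarrow> real \<Rightarrow> real" where
  "chebU_sum n c x = (\<Sum>j\<le>n. c j * chebU j x)"

definition Lmu :: "(real \<Rightarrow> real) \<Rightarrow> nat \<Rightarrow> (nat \<Rightarrow> real) \<Rightarrow> nat \<Rightarrow> real" where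
  "Lmu f n c i = integral {-1..1} (\<lambda>x. sgn (f x - chebU_sum n c x) * chebU i x)"

definition best_L1_approx :: "(real \<Rightarrow> real) \<Rightarrow> nat \<Rightarrow> real poly \<Rightarrow> bool" where
  "best_L1_approx f n p \<longleftrightarrow> degree p \<le> n \<and>
     (\<forall>q::real poly. degree q \<le> n \<longrightarrow> L1norm (\<lambda>x. f x - poly p x) \<le> L1norm (\<lambda>x. f x - poly q x))"

end

(*
  Put e = f - sum_j c_j U_j and write p - sum_j c_j U_j = sum_j d_j U_j. Pointwise
  |e| <= |f - p| + sgn(e) (p - sum_j c_j U_j), and integrating gives
  ||e||_1 <= ||f - p||_1 + sum_j d_j mu_j. The substitution x = cos t turns U_j(x) into
  sin((j+1)t) / sin t, and orthogonality of these sines on [0, pi] bounds every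
  coefficient: |d_j| <= 2/pi ||p - sum_j c_j U_j||_1 <= 2/pi (||e||_1 + ||f - p||_1).
  With K = 2/pi (n+1) max_i |mu_i| <= M/2 this yields ||e||_1 <= (1+K)/(1-K) ||f - p||_1,
  which is at most ||f - p||_1 / (1 - M).
*)

theory Submission
  imports Defs
begin

fun chebU_poly :: "nat \<Rightarrow> real poly" where
  "chebU_poly 0 = 1"
| "chebU_poly (Suc 0) = [:0, 2:]"
| "chebU_poly (Suc (Suc j)) = [:0, 2:] * chebU_poly (Suc j) - chebU_poly j"

lemma poly_chebU_poly: "poly (chebU_poly j) = chebU j"
  by (induction j rule: induct_nat_012) auto

lemma continuous_on_chebU [continuous_intros]: "continuous_on S (chebU j)"
  unfolding poly_chebU_poly[symmetric] by (intro continuous_intros)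

lemma continuous_on_chebU_sum [continuous_intros]: "continuous_on S (chebU_sum n c)"
  unfolding chebU_sum_def by (intro continuous_intros)

lemma degree_chebU_poly: "degree (chebU_poly j) \<le> j"
  by (induction j rule: induct_nat_012)
    (auto intro!: degree_diff_le order.trans[OF degree_mult_le])

lemma coeff_chebU_poly_self: "coeff (chebU_poly j) j = 2 ^ j"
proof (induction j rule: induct_nat_012)
  case (ge2 j)
  have "coeff (chebU_poly j) (Suc (Suc j)) = 0"
    using degree_chebU_poly[of j] by (intro coeff_eq_0) auto
  with ge2 show ?case
    by simp
qed auto

lemma poly_eq_chebU_sum:
  assumes "degree q \<le> n"
  shows "\<exists>a. poly q = chebU_sum n a"
  using assms
proof (induction n arbitrary: q)
  case 0
  then show ?case
    by (intro exI[of _ "\<lambda>_. coeff q 0"]) (auto simp: chebU_sum_def elim!: degree_eq_zeroE)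
next
  case (Suc n)
  define b where "b = coeff q (Suc n) / 2 ^ Suc n"
  define q' where "q' = q - smult b (chebU_poly (Suc n))"
  have "degree q' \<le> Suc n"
    unfolding q'_def using Suc.prems degree_chebU_poly[of "Suc n"]
    by (intro degree_diff_le) (auto intro: order.trans[OF degree_smult_le])
  moreover have "coeff q' (Suc n) = 0"
    by (simp add: q'_def b_def coeff_chebU_poly_self)
  ultimately have "coeff q' i = 0" if "i > n" for i
    using that by (cases "i = Suc n") (auto intro!: coeff_eq_0)
  then have "degree q' \<le> n"
    by (simp add: degree_le)
  then obtain a where "poly q' = chebU_sum n a"
    using Suc.IH by blast
  moreover have "poly q x = poly q' x + b * chebU (Suc n) x" for x
    by (simp add: q'_def poly_chebU_poly)
  ultimately have "poly q = chebU_sum (Suc n) (a(Suc n := b))"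
    by (simp add: chebU_sum_def fun_eq_iff)
  then show ?case
    by blast
qed

lemma chebU_cos_mult_sin: "chebU j (cos t) * sin t = sin ((real j + 1) * t)"
proof (induction j rule: induct_nat_012)
  case (ge2 j)
  have "sin ((real j + 3) * t) + sin ((real j + 1) * t) = 2 * cos t * sin ((real j + 2) * t)"
    using sin_add[of "(real j + 2) * t" t] sin_diff[of "(real j + 2) * t" t]
    by (simp add: algebra_simps)
  with ge2 show ?case
    by (simp add: algebra_simps)
qed (simp_all add: sin_double)

lemma has_integral_cos_int_mult:
  fixes m :: int
  shows "((\<lambda>t. cos (of_int m * t)) has_integral (if m = 0 then pi else 0)) {0..pi}"
proof (cases "m = 0")
  case False
  have "((\<lambda>t. cos (of_int m * t)) has_integral sin (of_int m * pi) / m - sin (of_int m * 0) / m) {0..pi}"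
    using False
    by (intro fundamental_theorem_of_calculus)
      (auto intro!: derivative_eq_intros simp: has_real_derivative_iff_has_vector_derivative[symmetric])
  with False show ?thesis
    using sin_npi_int[of m] by (simp add: mult.commute)
qed (use has_integral_const_real[of "1::real" 0 pi] in simp)

lemma has_integral_sin_mult_sin:
  fixes j k :: nat
  shows "((\<lambda>t. sin ((real k + 1) * t) * sin ((real j + 1) * t)) has_integral
          (if k = j then pi / 2 else 0)) {0..pi}"
proof -
  have "sin ((real k + 1) * t) * sin ((real j + 1) * t)
      = cos (of_int (int k - int j) * t) / 2 - cos (of_int (int k + int j + 2) * t) / 2" for t
    using cos_diff[of "(real k + 1) * t" "(real j + 1) * t"] cos_add[of "(real k + 1) * t" "(real j + 1) * t"]
    by (simp add: algebra_simps)
  then have product_to_sum: "(\<lambda>t. sin ((real k + 1) * t) * sin ((real j + 1) * t))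
      = (\<lambda>t. cos (of_int (int k - int j) * t) / 2 - cos (of_int (int k + int j + 2) * t) / 2)"
    by (rule ext)
  have "((\<lambda>t. sin ((real k + 1) * t) * sin ((real j + 1) * t)) has_integral
      (if int k - int j = 0 then pi else 0) / 2 - (if int k + int j + 2 = 0 then pi else 0) / 2) {0..pi}"
    unfolding product_to_sum by (intro has_integral_diff has_integral_divide has_integral_cos_int_mult)
  then show ?thesis
    by (cases "k = j") simp_all
qed

lemma has_integral_cos_substitution:
  fixes g :: "real \<Rightarrow> real"
  assumes "continuous_on {-1..1} g"
  shows "((\<lambda>t. sin t * g (cos t)) has_integral integral {-1..1} g) {0..pi}"
proof -
  have "((\<lambda>t. (- sin t) *\<^sub>R g (cos t)) has_integral
      integral {cos 0..cos pi} g - integral {cos pi..cos 0} g) {0..pi}"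
    using assms
    by (intro has_integral_substitution_general[of "{}"] continuous_intros derivative_eq_intros) auto
  then show ?thesis
    using has_integral_neg_iff[of "\<lambda>t. sin t * g (cos t)"] by simp
qed

lemma abs_coeff_le_L1norm_chebU_sum:
  assumes "j \<le> n"
  shows "\<bar>d j\<bar> \<le> 2 / pi * L1norm (chebU_sum n d)"
proof -
  let ?r = "chebU_sum n d" and ?s = "\<lambda>t. sin ((real j + 1) * t)"
  have expand: "sin t * ?r (cos t) * ?s t = (\<Sum>k\<le>n. d k * (sin ((real k + 1) * t) * ?s t))" for t
    unfolding chebU_sum_def sum_distrib_left sum_distrib_right
    by (intro sum.cong refl) (metis chebU_cos_mult_sin mult.commute mult.left_commute)
  have "((\<lambda>t. \<Sum>k\<le>n. d k * (sin ((real k + 1) * t) * ?s t)) has_integral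
      (\<Sum>k\<le>n. d k * (if k = j then pi / 2 else 0))) {0..pi}"
    by (intro has_integral_sum has_integral_mult_right has_integral_sin_mult_sin) auto
  then have coeff: "((\<lambda>t. sin t * ?r (cos t) * ?s t) has_integral d j * pi / 2) {0..pi}"
    using assms by (simp add: expand if_distrib[of "\<lambda>z. d _ * z"] cong: if_cong)
  have L1: "((\<lambda>t. sin t * \<bar>?r (cos t)\<bar>) has_integral L1norm ?r) {0..pi}"
    unfolding L1norm_def by (intro has_integral_cos_substitution continuous_intros)
  have "\<bar>sin t * ?r (cos t) * ?s t\<bar> \<le> sin t * \<bar>?r (cos t)\<bar>" if "t \<in> {0..pi}" for t
  proof -
    have "sin t \<ge> 0"
      using that by (simp add: sin_ge_zero)
    then show ?thesis
      by (simp add: abs_mult mult_left_le)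
  qed
  then have "\<bar>d j * pi / 2\<bar> \<le> L1norm ?r"
    using has_integral_norm_bound_integral_component[OF coeff L1, of 1] by simp
  then show ?thesis
    by (simp add: abs_mult field_simps)
qed

lemma sgn_mult_integrable_on:
  fixes e g :: "real \<Rightarrow> real"
  assumes e: "continuous_on {a..b} e" and g: "continuous_on {a..b} g"
  shows "(\<lambda>x. sgn (e x) * g x) integrable_on {a..b}"
proof (rule measurable_bounded_by_integrable_imp_integrable_real[where g="\<lambda>x. \<bar>g x\<bar>"])
  have "e \<in> borel_measurable (lebesgue_on {a..b})" "g \<in> borel_measurable (lebesgue_on {a..b})"
    using e g by (auto intro: continuous_imp_measurable_on_sets_lebesgue)
  then show "(\<lambda>x. sgn (e x) * g x) \<in> borel_measurable (lebesgue_on {a..b})"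
    by measurable
  show "(\<lambda>x. \<bar>g x\<bar>) integrable_on {a..b}"
    using g by (intro integrable_continuous_interval continuous_intros)
  show "\<bar>sgn (e x) * g x\<bar> \<le> \<bar>g x\<bar>" for x
    by (auto simp: abs_mult sgn_real_def)
qed auto

lemma integral_sgn_mult_chebU_sum:
  assumes "continuous_on {-1..1} f"
  shows "integral {-1..1} (\<lambda>x. sgn (f x - chebU_sum n c x) * chebU_sum n d x)
    = (\<Sum>j\<le>n. d j * Lmu f n c j)"
proof -
  have "integral {-1..1} (\<lambda>x. sgn (f x - chebU_sum n c x) * chebU_sum n d x)
      = integral {-1..1} (\<lambda>x. \<Sum>j\<le>n. d j * (sgn (f x - chebU_sum n c x) * chebU j x))"
    by (simp add: chebU_sum_def sum_distrib_left sum_distrib_right mult_ac)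
  also have "\<dots> = (\<Sum>j\<le>n. d j * Lmu f n c j)"
  proof -
    have "(\<lambda>x. sgn (f x - chebU_sum n c x) * chebU j x) integrable_on {-1..1}" for j
      using assms by (intro sgn_mult_integrable_on continuous_intros)
    then show ?thesis
      unfolding Lmu_def by (subst integral_sum) (auto intro: integrable_on_mult_right)
  qed
  finally show ?thesis .
qed

lemma sum_mult_le_L1norm_chebU_sum:
  fixes \<mu> :: "nat \<Rightarrow> real"
  shows "(\<Sum>j\<le>n. d j * \<mu> j)
    \<le> 2 / pi * (real n + 1) * (MAX i\<in>{0..n}. \<bar>\<mu> i\<bar>) * L1norm (chebU_sum n d)"
proof -
  have "(\<Sum>j\<le>n. d j * \<mu> j) \<le> (\<Sum>j\<le>n. 2 / pi * L1norm (chebU_sum n d) * (MAX i\<in>{0..n}. \<bar>\<mu> i\<bar>))"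
  proof (rule sum_mono)
    fix j assume "j \<in> {..n}"
    then have "\<bar>d j\<bar> \<le> 2 / pi * L1norm (chebU_sum n d)" "\<bar>\<mu> j\<bar> \<le> (MAX i\<in>{0..n}. \<bar>\<mu> i\<bar>)"
      using abs_coeff_le_L1norm_chebU_sum[of j n d] by auto
    then have "\<bar>d j\<bar> * \<bar>\<mu> j\<bar> \<le> 2 / pi * L1norm (chebU_sum n d) * (MAX i\<in>{0..n}. \<bar>\<mu> i\<bar>)"
      by (intro mult_mono) auto
    then show "d j * \<mu> j \<le> 2 / pi * L1norm (chebU_sum n d) * (MAX i\<in>{0..n}. \<bar>\<mu> i\<bar>)"
      by (metis abs_ge_self abs_mult order_trans)
  qed
  also have "\<dots> = 2 / pi * (real n + 1) * (MAX i\<in>{0..n}. \<bar>\<mu> i\<bar>) * L1norm (chebU_sum n d)"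
    by (simp add: algebra_simps)
  finally show ?thesis .
qed

lemma L1norm_nonneg:
  assumes "continuous_on {-1..1} g"
  shows "L1norm g \<ge> 0"
  unfolding L1norm_def using assms
  by (intro integral_nonneg integrable_continuous_interval continuous_intros) auto

lemma L1norm_diff_le:
  assumes "continuous_on {-1..1} g" "continuous_on {-1..1} h"
  shows "L1norm (\<lambda>x. g x - h x) \<le> L1norm g + L1norm h"
proof -
  have "L1norm (\<lambda>x. g x - h x) \<le> integral {-1..1} (\<lambda>x. \<bar>g x\<bar> + \<bar>h x\<bar>)"
    unfolding L1norm_def using assms
    by (intro integral_le integrable_continuous_interval continuous_intros) auto
  also have "\<dots> = L1norm g + L1norm h"
    unfolding L1norm_def using assms
    by (intro integral_add integrable_continuous_interval continuous_intros)
  finally show ?thesis .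
qed

lemma L1norm_le_plus_sgn_pairing:
  assumes e: "continuous_on {-1..1} e" and g: "continuous_on {-1..1} g"
  shows "L1norm e \<le> L1norm (\<lambda>x. e x - g x) + integral {-1..1} (\<lambda>x. sgn (e x) * g x)"
proof -
  have "\<bar>e x\<bar> \<le> \<bar>e x - g x\<bar> + sgn (e x) * g x" for x
  proof -
    have "\<bar>e x\<bar> = sgn (e x) * (e x - g x) + sgn (e x) * g x"
      by (simp add: abs_sgn algebra_simps)
    moreover have "sgn (e x) * (e x - g x) \<le> \<bar>e x - g x\<bar>"
      by (auto simp: sgn_real_def)
    ultimately show ?thesis
      by linarith
  qed
  then have "L1norm e \<le> integral {-1..1} (\<lambda>x. \<bar>e x - g x\<bar> + sgn (e x) * g x)"
    unfolding L1norm_def using assms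
    by (intro integral_le integrable_add integrable_continuous_interval sgn_mult_integrable_on continuous_intros) auto
  also have "\<dots> = L1norm (\<lambda>x. e x - g x) + integral {-1..1} (\<lambda>x. sgn (e x) * g x)"
    unfolding L1norm_def using assms
    by (intro integral_add integrable_continuous_interval sgn_mult_integrable_on continuous_intros)
  finally show ?thesis .
qed

lemma absorb_linear_self_bound:
  fixes A E K M :: real
  assumes A: "A \<le> E + K * (A + E)" and "0 \<le> K" "2 * K \<le> M" "M < 1" "0 \<le> E"
  shows "A \<le> 1 / (1 - M) * E"
proof -
  have "0 \<le> K * M"
    using assms by (intro mult_nonneg_nonneg) auto
  have "(1 + K) * (1 - M) = 1 - K - (M - 2 * K) - K * M"
    by (simp add: algebra_simps)
  also have "\<dots> \<le> 1 - K"
    using assms \<open>0 \<le> K * M\<close> by linarith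
  finally have "(1 + K) * (1 - M) \<le> 1 - K" .
  have "(1 - K) * (A * (1 - M)) = A * (1 - K) * (1 - M)"
    by (simp add: mult_ac)
  also have "\<dots> \<le> E * (1 + K) * (1 - M)"
    using A \<open>M < 1\<close> by (intro mult_right_mono) (auto simp: algebra_simps)
  also have "\<dots> \<le> (1 - K) * E"
    using mult_left_mono[OF \<open>(1 + K) * (1 - M) \<le> 1 - K\<close> \<open>0 \<le> E\<close>] by (simp add: mult_ac)
  finally have "A * (1 - M) \<le> E"
    using assms by simp
  then show ?thesis
    using \<open>M < 1\<close> by (simp add: field_simps)
qed

lemma MAX_abs_nonneg:
  fixes \<mu> :: "nat \<Rightarrow> real"
  shows "0 \<le> (MAX i\<in>{0..n}. \<bar>\<mu> i\<bar>)"
proof -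
  have "\<bar>\<mu> 0\<bar> \<le> (MAX i\<in>{0..n}. \<bar>\<mu> i\<bar>)"
    by (intro Max_ge) auto
  then show ?thesis
    by (meson abs_ge_zero order_trans)
qed

lemma L1norm_error_chebU_sum_self_bound:
  fixes f :: "real \<Rightarrow> real" and c :: "nat \<Rightarrow> real" and q :: "real poly"
  assumes f: "continuous_on {-1..1} f" and q: "degree q \<le> n"
  defines "K \<equiv> 2 / pi * (real n + 1) * (MAX i\<in>{0..n}. \<bar>Lmu f n c i\<bar>)"
  shows "L1norm (\<lambda>x. f x - chebU_sum n c x) \<le> L1norm (\<lambda>x. f x - poly q x)
    + K * (L1norm (\<lambda>x. f x - chebU_sum n c x) + L1norm (\<lambda>x. f x - poly q x))"
proof -
  let ?A = "L1norm (\<lambda>x. f x - chebU_sum n c x)" and ?E = "L1norm (\<lambda>x. f x - poly q x)"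
  obtain a where a: "poly q = chebU_sum n a"
    using poly_eq_chebU_sum[OF q] by blast
  define d where "d j = a j - c j" for j
  have d: "chebU_sum n d = (\<lambda>x. (f x - chebU_sum n c x) - (f x - poly q x))"
    by (simp add: fun_eq_iff a chebU_sum_def d_def sum_subtractf left_diff_distrib)
  have "?A \<le> L1norm (\<lambda>x. (f x - chebU_sum n c x) - chebU_sum n d x)
      + integral {-1..1} (\<lambda>x. sgn (f x - chebU_sum n c x) * chebU_sum n d x)"
    using f by (intro L1norm_le_plus_sgn_pairing continuous_intros)
  also have "\<dots> = ?E + (\<Sum>j\<le>n. d j * Lmu f n c j)"
    by (simp only: integral_sgn_mult_chebU_sum[OF f]) (simp add: d)
  also have "\<dots> \<le> ?E + K * L1norm (chebU_sum n d)"
    using sum_mult_le_L1norm_chebU_sum[where \<mu> = "Lmu f n c"] by (simp add: K_def)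
  also have "\<dots> \<le> ?E + K * (?A + ?E)"
  proof -
    have "L1norm (chebU_sum n d) \<le> ?A + ?E"
      unfolding d using f by (intro L1norm_diff_le continuous_intros)
    moreover have "K \<ge> 0"
      by (simp add: K_def MAX_abs_nonneg)
    ultimately show ?thesis
      by (simp add: mult_left_mono)
  qed
  finally show ?thesis .
qed

lemma L1norm_error_chebU_sum_le:
  fixes f :: "real \<Rightarrow> real" and q :: "real poly"
  assumes f: "continuous_on {-1..1} f" and q: "degree q \<le> n"
    and small: "2 / pi * (real n + 2)^2 * (MAX i\<in>{0..n}. \<bar>Lmu f n c i\<bar>) < 1"
  shows "L1norm (\<lambda>x. f x - chebU_sum n c x)
    \<le> 1 / (1 - 2 / pi * (real n + 2)^2 * (MAX i\<in>{0..n}. \<bar>Lmu f n c i\<bar>))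
       * L1norm (\<lambda>x. f x - poly q x)"
proof (rule absorb_linear_self_bound[OF L1norm_error_chebU_sum_self_bound[OF f q] _ _ small])
  let ?m = "MAX i\<in>{0..n}. \<bar>Lmu f n c i\<bar>"
  have "0 \<le> ?m"
    by (rule MAX_abs_nonneg)
  then show "0 \<le> 2 / pi * (real n + 1) * ?m"
    by simp
  have "2 * (real n + 1) * (2 / pi * ?m) \<le> (real n + 2)^2 * (2 / pi * ?m)"
    using \<open>0 \<le> ?m\<close> by (intro mult_right_mono) (auto simp: power2_eq_square algebra_simps)
  then show "2 * (2 / pi * (real n + 1) * ?m) \<le> 2 / pi * (real n + 2)^2 * ?m"
    by (simp add: mult_ac)
  show "0 \<le> L1norm (\<lambda>x. f x - poly q x)"
    using f by (intro L1norm_nonneg continuous_intros)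
qed

theorem theorem5p1:
  fixes f :: "real \<Rightarrow> real" and n :: nat and c :: "nat \<Rightarrow> real" and p :: "real poly"
  assumes "continuous_on {-1..1} f"
    and "best_L1_approx f n p"
    and "2 / pi * (real n + 2)^2 * (MAX i\<in>{0..n}. \<bar>Lmu f n c i\<bar>) < 1"
  shows "L1norm (\<lambda>x. f x - chebU_sum n c x)
    \<le> 1 / (1 - 2 / pi * (real n + 2)^2 * (MAX i\<in>{0..n}. \<bar>Lmu f n c i\<bar>))
       * L1norm (\<lambda>x. f x - poly p x)"
  using assms by (intro L1norm_error_chebU_sum_le) (auto simp: best_L1_approx_def)

end
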